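(* Let $\mathbf{C}=\mathbf{C}_1\,\dot\cup\,\mathbf{C}_2$ and $\mathbf{B}\in\dot{\mathbb{P}}(\mathbb{L}(\mathbf{C}_1))$ with $|\mathbf{B}|=|\mathbf{C}_1|$. Suppose every variable $X\in\mathbf{C}_2$ has a positive monotonic effect on $D$ relative to $\mathbf{C}$. If for some $\omega^*\in\Omega$ (i) $D_{\mathbf{B}=\mathbf{1},\mathbf{C}_2=\mathbf{0}}(\omega^* )=1$ and (ii) for all $L\in\mathbf{B}$, $D_{\mathbf{B}\setminus\{L\}=\mathbf{1},L=0,\mathbf{C}_2=\mathbf{0}}(\omega^* )=0$, then $\mathbf{B}$ is a minimal sufficient cause for $D$ relative to $\mathbf{C}$ for $\omega^*$.
   Context: Events are binary random variables on a population $\Omega$; $\overline{X}=1-X$; $\mathbb{L}(\mathbf{C})=\mathbf{C}\cup\{\overline{X}:X\in\mathbf{C}\}$; $\dot{\mathbb{P}}(\mathbb{L}(\mathbf{C}))$ is the set of subsets of $\mathbb{L}(\mathbf{C})$ not containing both $X$ and $\overline{X}$; $(L)_{\mathbf{c}}$ is the value of literal $L$ under assignment $\mathbf{c}$; $\bigwedge(\mathbf{B})=\min_{L\in\mathbf{B}}L$. Potential outcomes $D_{\mathbf{c}}(\omega)\in\{0,1\}$. Since $|\mathbf{B}|=|\mathbf{C}_1|$, setting literals of $\mathbf{B}$ determines an assignment to $\mathbf{C}_1$. A variable $X\in\mathbf{C}$ has a positive monotonic effect on $D$ relative to $\mathbf{C}$ if for all $\omega$ and all values of the other variables of $\mathbf{C}$,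 the potential outcome with $X=1$ is at least that with $X=0$. $\mathbf{B}\subseteq\mathbb{L}(\mathbf{C})$ is a sufficient cause for $D$ relative to $\mathbf{C}$ for $\omega^*$ if some $\mathbf{c}^*$ has $(\bigwedge(\mathbf{B}))_{\mathbf{c}^*}=1$ and $D_{\mathbf{c}}(\omega^* )=1$ for every $\mathbf{c}$ with $(\bigwedge(\mathbf{B}))_{\mathbf{c}}=1$; it is minimal if no proper subset of $\mathbf{B}$ is a sufficient cause for $D$ relative to $\mathbf{C}$ for $\omega^*$. *)

theory Defs
  imports Main
begin

text \<open>Potential outcomes:
  D :: 'w => ('v => bool) => bool, where D w c is D_c(w) (True = 1).\<close>

datatype 'v lit = Pos 'v | Neg 'v

fun lit_var :: "'v lit \<Rightarrow> 'v" where
  "lit_var (Pos x) = x" | "lit_var (Neg x) = x"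

fun lit_neg :: "'v lit \<Rightarrow> 'v lit" where
  "lit_neg (Pos x) = Neg x" | "lit_neg (Neg x) = Pos x"

fun lit_val :: "('v \<Rightarrow> bool) \<Rightarrow> 'v lit \<Rightarrow> bool" where
  "lit_val c (Pos x) = c x" | "lit_val c (Neg x) = (\<not> c x)"

definition lits :: "'v set \<Rightarrow> 'v lit set" where
  "lits C = Pos ` C \<union> Neg ` C"

definition consistent :: "'v lit set \<Rightarrow> bool" where
  "consistent B \<longleftrightarrow> (\<forall>x. \<not> (Pos x \<in> B \<and> Neg x \<in> B))"

definition assignments :: "'v set \<Rightarrow> ('v \<Rightarrow> bool) set" where
  "assignments C = {c. \<forall>x. x \<notin> C \<longrightarrow> c x = False}"

definition conj_val :: "'v lit set \<Rightarrow> ('v \<Rightarrow> bool) \<Rightarrow> bool" where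
  "conj_val B c \<longleftrightarrow> (\<forall>L\<in>B. lit_val c L)"

text \<open>Assignment setting all literals in S to 1 and every other variable to 0.\<close>
definition assign_lits :: "'v lit set \<Rightarrow> ('v \<Rightarrow> bool)" where
  "assign_lits S = (\<lambda>x. Pos x \<in> S)"

definition pos_monotonic :: "'v set \<Rightarrow> ('w \<Rightarrow> ('v \<Rightarrow> bool) \<Rightarrow> bool) \<Rightarrow> 'v \<Rightarrow> bool" where
  "pos_monotonic C D X \<longleftrightarrow>
     (\<forall>w. \<forall>c \<in> assignments C. D w (c(X := False)) \<longrightarrow> D w (c(X := True)))"

definition sufficient_cause ::
  "'v set \<Rightarrow> ('w \<Rightarrow> ('v \<Rightarrow> bool) \<Rightarrow> bool) \<Rightarrow> 'w \<Rightarrow> 'v lit set \<Rightarrow> bool" where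
  "sufficient_cause C D w B \<longleftrightarrow>
     (\<exists>c \<in> assignments C. conj_val B c) \<and>
     (\<forall>c \<in> assignments C. conj_val B c \<longrightarrow> D w c)"

definition minimal_sufficient_cause ::
  "'v set \<Rightarrow> ('w \<Rightarrow> ('v \<Rightarrow> bool) \<Rightarrow> bool) \<Rightarrow> 'w \<Rightarrow> 'v lit set \<Rightarrow> bool" where
  "minimal_sufficient_cause C D w B \<longleftrightarrow>
     sufficient_cause C D w B \<and> (\<forall>B'. B' \<subset> B \<longrightarrow> \<not> sufficient_cause C D w B')"

end

theory Submission
  imports Defs
begin

text \<open>Since \<open>|B| = |C\<^sub>1|\<close> and \<open>B\<close> is consistent, every variable of \<open>C\<^sub>1\<close> occurs in exactly one
  literal of \<open>B\<close>, so an assignment satisfying \<open>\<And>B\<close> agrees with \<open>B = 1, C\<^sub>2 = 0\<close> on \<open>C\<^sub>1\<close>.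
  It is obtained from that assignment by switching some variables of \<open>C\<^sub>2\<close> to 1, which by
  monotonicity keeps \<open>D = 1\<close>; hence \<open>B\<close> is sufficient. A proper subset misses some \<open>L \<in> B\<close>,
  and is satisfied by the assignment with \<open>L\<close> flipped, where \<open>D = 0\<close>; hence \<open>B\<close> is minimal.\<close>

lemma lit_var_in_iff_lits: "lit_var L \<in> C \<longleftrightarrow> L \<in> lits C"
  by (cases L) (auto simp: lits_def)

lemma lit_neg_in_lits: "L \<in> lits C \<Longrightarrow> lit_neg L \<in> lits C"
  by (cases L) (auto simp: lits_def)

lemma consistent_inj_on_lit_var:
  assumes "consistent B"
  shows "inj_on lit_var B"
proof (rule inj_onI)
  fix L M assume "L \<in> B" "M \<in> B" "lit_var L = lit_var M"
  with assms show "L = M"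
    unfolding consistent_def by (cases L; cases M) auto
qed

lemma consistent_flip:
  assumes "consistent B" and "L \<in> B"
  shows "consistent (insert (lit_neg L) (B - {L}))"
  using assms inj_onD[OF consistent_inj_on_lit_var[OF assms(1)]]
  unfolding consistent_def by (cases L) fastforce+

lemma lit_var_image_eq_if_card_eq:
  assumes "finite C" and "B \<subseteq> lits C" and "consistent B" and "card B = card C"
  shows "lit_var ` B = C"
proof (rule card_subset_eq[OF assms(1)])
  show "lit_var ` B \<subseteq> C"
    using assms(2) lit_var_in_iff_lits by blast
  show "card (lit_var ` B) = card C"
    using card_image[OF consistent_inj_on_lit_var[OF assms(3)]] assms(4) by simp
qed

lemma assign_lits_in_assignments: "S \<subseteq> lits C \<Longrightarrow> assign_lits S \<in> assignments C"
  by (auto simp: assign_lits_def assignments_def lits_def)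

lemma conj_val_assign_lits:
  assumes "consistent B"
  shows "conj_val B (assign_lits B)"
  unfolding conj_val_def
proof
  fix L assume "L \<in> B"
  with assms show "lit_val (assign_lits B) L"
    unfolding consistent_def assign_lits_def by (cases L) auto
qed

lemma conj_val_determines:
  assumes "consistent B" and "x \<in> lit_var ` B" and "conj_val B c"
  shows "c x = assign_lits B x"
proof -
  obtain L where "L \<in> B" "lit_var L = x" using assms(2) by blast
  then show ?thesis
    using assms(1,3) unfolding consistent_def conj_val_def assign_lits_def
    by (cases L) fastforce+
qed

lemma pos_monotonic_upd_True:
  assumes "pos_monotonic C D X" and "c \<in> assignments C" and "D w c"
  shows "D w (c(X := True))"
proof (cases "c X")
  case True
  then show ?thesis using assms(3) by (simp add: fun_upd_idem)
next
  case False
  then have "c(X := False) = c" by (simp add: fun_upd_idem)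
  then show ?thesis using assms unfolding pos_monotonic_def by metis
qed

lemma pos_monotonic_raise_set:
  assumes "finite S" and "S \<subseteq> C" and "\<forall>X\<in>S. pos_monotonic C D X"
    and "c \<in> assignments C" and "D w c"
  shows "D w (\<lambda>x. c x \<or> x \<in> S)"
  using assms
proof (induction S rule: finite_induct)
  case empty
  then show ?case by simp
next
  case (insert X S)
  have "(\<lambda>x. c x \<or> x \<in> S) \<in> assignments C"
    using insert.prems(1,3) by (auto simp: assignments_def)
  moreover have "(\<lambda>x. c x \<or> x \<in> S)(X := True) = (\<lambda>x. c x \<or> x \<in> insert X S)"
    by (auto simp: fun_eq_iff)
  ultimately show ?case
    using insert pos_monotonic_upd_True[of C D X "\<lambda>x. c x \<or> x \<in> S" w] by simp
qed

lemma sufficient_cause_if_rest_monotonic: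
  assumes "C = C1 \<union> C2" and "C1 \<inter> C2 = {}" and "finite C2"
    and "B \<subseteq> lits C1" and "consistent B" and "lit_var ` B = C1"
    and "\<forall>X\<in>C2. pos_monotonic C D X" and "D w (assign_lits B)"
  shows "sufficient_cause C D w B"
  unfolding sufficient_cause_def
proof (intro conjI ballI impI)
  have "lits C1 \<subseteq> lits C" using assms(1) by (auto simp: lits_def)
  then have B_assignment: "assign_lits B \<in> assignments C"
    using assms(4) assign_lits_in_assignments by blast
  then show "\<exists>c\<in>assignments C. conj_val B c"
    using conj_val_assign_lits[OF assms(5)] by blast
  fix c assume c: "c \<in> assignments C" "conj_val B c"
  define S where "S = {x \<in> C2. c x}"
  have "c = (\<lambda>x. assign_lits B x \<or> x \<in> S)"
  proof
    fix x
    consider "x \<in> C1" | "x \<in> C2" | "x \<notin> C"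
      using assms(1) by blast
    then show "c x = (assign_lits B x \<or> x \<in> S)"
    proof cases
      case 1
      then have "c x = assign_lits B x"
        using conj_val_determines[OF assms(5) _ c(2)] assms(6) by blast
      moreover have "x \<notin> S" using 1 assms(2) by (auto simp: S_def)
      ultimately show ?thesis by simp
    next
      case 2
      then have "\<not> assign_lits B x"
        using assms(2,4) by (auto simp: assign_lits_def lits_def)
      then show ?thesis using 2 by (simp add: S_def)
    next
      case 3
      then show ?thesis
        using c(1) B_assignment assms(1) by (auto simp: assignments_def S_def)
    qed
  qed
  moreover have "D w (\<lambda>x. assign_lits B x \<or> x \<in> S)"
  proof (rule pos_monotonic_raise_set[where D = D and w = w, OF _ _ _ B_assignment assms(8)])
    show "finite S" using assms(3) by (simp add: S_def)
    show "S \<subseteq> C" using assms(1) by (auto simp: S_def)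
    show "\<forall>X\<in>S. pos_monotonic C D X" using assms(7) by (simp add: S_def)
  qed
  ultimately show "D w c" by simp
qed

lemma minimal_sufficient_cause_if_flips_fail:
  assumes "sufficient_cause C D w B" and "B \<subseteq> lits C" and "consistent B"
    and "\<forall>L\<in>B. \<not> D w (assign_lits (insert (lit_neg L) (B - {L})))"
  shows "minimal_sufficient_cause C D w B"
  unfolding minimal_sufficient_cause_def
proof (intro conjI allI impI notI)
  show "sufficient_cause C D w B" by fact
  fix B' assume "B' \<subset> B" and B'_sufficient: "sufficient_cause C D w B'"
  then obtain L where L: "L \<in> B" "B' \<subseteq> B - {L}" by blast
  define flip where "flip = insert (lit_neg L) (B - {L})"
  have "flip \<subseteq> lits C"
    using L(1) assms(2) lit_neg_in_lits by (auto simp: flip_def)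
  then have "assign_lits flip \<in> assignments C"
    by (rule assign_lits_in_assignments)
  moreover have "conj_val B' (assign_lits flip)"
    using conj_val_assign_lits[OF consistent_flip[OF assms(3) L(1)]] L(2)
    unfolding flip_def conj_val_def by blast
  ultimately have "D w (assign_lits flip)"
    using B'_sufficient unfolding sufficient_cause_def by blast
  then show False using assms(4) L(1) unfolding flip_def by blast
qed

theorem mainTheorem9:
  fixes C C1 C2 :: "'v set" and B :: "'v lit set"
    and D :: "'w \<Rightarrow> ('v \<Rightarrow> bool) \<Rightarrow> bool" and w :: 'w
  assumes "finite C" and "C = C1 \<union> C2" and "C1 \<inter> C2 = {}"
    and "B \<subseteq> lits C1" and "consistent B" and "card B = card C1"
    and "\<forall>X\<in>C2. pos_monotonic C D X"
    and "D w (assign_lits B)"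
    and "\<forall>L\<in>B. \<not> D w (assign_lits (insert (lit_neg L) (B - {L})))"
  shows "minimal_sufficient_cause C D w B"
proof (rule minimal_sufficient_cause_if_flips_fail)
  have "finite C1" "finite C2" using assms(1,2) by auto
  have "lit_var ` B = C1"
    by (rule lit_var_image_eq_if_card_eq) (use \<open>finite C1\<close> assms(4-6) in auto)
  with assms(2-5,7,8) \<open>finite C2\<close> show "sufficient_cause C D w B"
    by (intro sufficient_cause_if_rest_monotonic)
  show "B \<subseteq> lits C"
    using assms(2,4) by (auto simp: lits_def)
qed (fact assms(5), fact assms(9))

end
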